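(* Let $S$ be a virtual flat biquandle, $C_n(S)$ the free abelian group on $n$-tuples of elements of $S$ ($C_0(S)=0$), with boundary $\partial_n$ given by $\partial_n=0$ for $n\le 1$ and for $n\ge2$ $$\partial_n(a_1,\dots,a_n)=\sum_{i=1}^n(-1)^i\big((a_1\ast a_i,\dots,a_{i-1}\ast a_i,a_{i+1},\dots,a_n)-(a_1,\dots,a_{i-1},a_{i+1}\circ a_i,\dots,a_n\circ a_i)\big).$$ Let $C_n'(S)\subset C_n(S)$ be the subgroup generated by the elements $(a_1,\dots,a_i,a_{i+1},\dots,a_n)+(a_1,\dots,a_{i+1}\circ a_i,a_i\ast a_{i+1},\dots,a_n)$ for $n\ge2$ (all $a_j\in S$, $1\le i\le n-1$), and $C_n'(S)=0$ for $n\le1$. Then $\partial_n(C_n'(S))\subset C_{n-1}'(S)$ for all $n$, so $\{C_n'(S),\partial_n\}$ is a sub-complex of $\{C_n(S),\partial_n\}$.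
   Context: A virtual flat biquandle is a set $S$ with two binary operations $a\ast b$, $a\circ b$; writing $S_b(a)=a\ast b$, $T_b(a)=a\circ b$, for all $a,b\in S$: (1) $S_aS_b=S_bS_a$, $T_aT_b=T_bT_a$, $S_aT_b=T_bS_a$; (2) $S_a=S_{T_b(a)}=S_{S_b(a)}$, $T_a=T_{S_b(a)}=T_{T_b(a)}$; (3) $T_aS_a=S_aT_a=\mathrm{id}$. The maps $\partial_n$ satisfy $\partial_{n-1}\partial_n=0$. *)

theory Defs
  imports "HOL-Algebra.Free_Abelian_Groups"
begin

text \<open>A virtual flat biquandle structure on the type 'a, with
  star a b = a * b  (= S_b(a)) and circ a b = a o b (= T_b(a)).\<close>

definition virtual_flat_biquandle :: "('a \<Rightarrow> 'a \<Rightarrow> 'a) \<Rightarrow> ('a \<Rightarrow> 'a \<Rightarrow> 'a) \<Rightarrow> bool" where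
  "virtual_flat_biquandle star circ \<longleftrightarrow>
     (\<forall>a b x. star (star x b) a = star (star x a) b) \<and>
     (\<forall>a b x. circ (circ x b) a = circ (circ x a) b) \<and>
     (\<forall>a b x. star (circ x b) a = circ (star x a) b) \<and>
     (\<forall>a b x. star x a = star x (circ a b) \<and> star x a = star x (star a b)) \<and>
     (\<forall>a b x. circ x a = circ x (star a b) \<and> circ x a = circ x (circ a b)) \<and>
     (\<forall>a x. circ (star x a) a = x \<and> star (circ x a) a = x)"

definition chain_group :: "nat \<Rightarrow> ('a list \<Rightarrow>\<^sub>0 int) monoid" where
  "chain_group n = (if n = 0 then free_Abelian_group {} else free_Abelian_group {xs. length xs = n})"

text \<open>Boundary of a basis tuple (a_1,...,a_n), n >= 2; index i (0-based) corresponds to i+1.\<close>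

definition bd_tuple :: "('a \<Rightarrow> 'a \<Rightarrow> 'a) \<Rightarrow> ('a \<Rightarrow> 'a \<Rightarrow> 'a) \<Rightarrow> 'a list \<Rightarrow> ('a list \<Rightarrow>\<^sub>0 int)" where
  "bd_tuple star circ xs =
     (\<Sum>i<length xs. frag_cmul ((-1) ^ (i + 1))
        (frag_of (map (\<lambda>x. star x (xs ! i)) (take i xs) @ drop (Suc i) xs)
         - frag_of (take i xs @ map (\<lambda>x. circ x (xs ! i)) (drop (Suc i) xs))))"

definition boundary :: "('a \<Rightarrow> 'a \<Rightarrow> 'a) \<Rightarrow> ('a \<Rightarrow> 'a \<Rightarrow> 'a) \<Rightarrow> nat \<Rightarrow> ('a list \<Rightarrow>\<^sub>0 int) \<Rightarrow> ('a list \<Rightarrow>\<^sub>0 int)" where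
  "boundary star circ n c = (if n \<le> 1 then 0 else frag_extend (bd_tuple star circ) c)"

definition degen_gens :: "('a \<Rightarrow> 'a \<Rightarrow> 'a) \<Rightarrow> ('a \<Rightarrow> 'a \<Rightarrow> 'a) \<Rightarrow> nat \<Rightarrow> ('a list \<Rightarrow>\<^sub>0 int) set" where
  "degen_gens star circ n =
     {frag_of xs + frag_of (take i xs @ [circ (xs ! Suc i) (xs ! i), star (xs ! i) (xs ! Suc i)] @ drop (Suc (Suc i)) xs)
      | xs i. length xs = n \<and> Suc i < n}"

definition degen_chains :: "('a \<Rightarrow> 'a \<Rightarrow> 'a) \<Rightarrow> ('a \<Rightarrow> 'a \<Rightarrow> 'a) \<Rightarrow> nat \<Rightarrow> ('a list \<Rightarrow>\<^sub>0 int) set" where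
  "degen_chains star circ n =
     (if n \<le> 1 then {0} else carrier (subgroup_generated (chain_group n) (degen_gens star circ n)))"

end

theory Submission
  imports Defs
begin

text \<open>Every generator of \<open>C'_n(S)\<close> is \<open>x + x'\<close>, where \<open>x'\<close> replaces an adjacent
  pair \<open>a, b\<close> of \<open>x\<close> by \<open>b \<circ> a, a \<ast> b\<close>. In \<open>\<partial>x + \<partial>x'\<close> the faces at the two
  swapped positions cancel crosswise, because the biquandle axioms make the operands
  \<open>a\<close>, \<open>b\<close>, \<open>b \<circ> a\<close>, \<open>a \<ast> b\<close> act identically on the remaining entries and
  \<open>(b \<circ> a) \<ast> (a \<ast> b) = b\<close>, \<open>(a \<ast> b) \<circ> (b \<circ> a) = a\<close>. Every other face index acts
  on \<open>x\<close> and \<open>x'\<close> alike, by the commutation axioms, and so turns the pair into a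
  difference of two generators of \<open>C'_{n-1}(S)\<close>.\<close>

definition star_face :: "('a \<Rightarrow> 'a \<Rightarrow> 'a) \<Rightarrow> nat \<Rightarrow> 'a list \<Rightarrow> 'a list" where
  "star_face star j zs = map (\<lambda>x. star x (zs ! j)) (take j zs) @ drop (Suc j) zs"

definition circ_face :: "('a \<Rightarrow> 'a \<Rightarrow> 'a) \<Rightarrow> nat \<Rightarrow> 'a list \<Rightarrow> 'a list" where
  "circ_face circ j zs = take j zs @ map (\<lambda>x. circ x (zs ! j)) (drop (Suc j) zs)"

definition bd_term ::
    "('a \<Rightarrow> 'a \<Rightarrow> 'a) \<Rightarrow> ('a \<Rightarrow> 'a \<Rightarrow> 'a) \<Rightarrow> 'a list \<Rightarrow> nat \<Rightarrow> ('a list \<Rightarrow>\<^sub>0 int)" where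
  "bd_term star circ zs j =
     frag_cmul ((-1) ^ (j + 1)) (frag_of (star_face star j zs) - frag_of (circ_face circ j zs))"

definition degen_pair ::
    "('a \<Rightarrow> 'a \<Rightarrow> 'a) \<Rightarrow> ('a \<Rightarrow> 'a \<Rightarrow> 'a) \<Rightarrow> 'a list \<Rightarrow> 'a \<Rightarrow> 'a \<Rightarrow> 'a list \<Rightarrow> ('a list \<Rightarrow>\<^sub>0 int)" where
  "degen_pair star circ p a b q = frag_of (p @ a # b # q) + frag_of (p @ circ b a # star a b # q)"

lemma frag_cmul_diff_distrib2: "frag_cmul c (a - b) = frag_cmul c a - frag_cmul c b"
  by (rule poly_mapping_eqI) (simp add: lookup_minus algebra_simps)

lemma bd_tuple_eq_sum_bd_term:
  "bd_tuple star circ zs = (\<Sum>j<length zs. bd_term star circ zs j)"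
  by (simp add: bd_tuple_def bd_term_def star_face_def circ_face_def)

lemma star_face_append_left:
  "j < length u \<Longrightarrow> star_face star j (u @ v) = star_face star j u @ v"
  by (simp add: star_face_def nth_append)

lemma circ_face_append_left:
  "j < length u \<Longrightarrow>
   circ_face circ j (u @ v) = circ_face circ j u @ map (\<lambda>x. circ x (u ! j)) v"
  by (simp add: circ_face_def nth_append)

lemma star_face_append_right:
  "k < length v \<Longrightarrow>
   star_face star (length u + k) (u @ v) = map (\<lambda>x. star x (v ! k)) u @ star_face star k v"
  by (simp add: star_face_def nth_append)

lemma circ_face_append_right:
  "k < length v \<Longrightarrow> circ_face circ (length u + k) (u @ v) = u @ circ_face circ k v"
  by (simp add: circ_face_def nth_append)

lemma length_star_face [simp]: "j < length zs \<Longrightarrow> length (star_face star j zs) = length zs - 1"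
  by (simp add: star_face_def)

lemma length_circ_face [simp]: "j < length zs \<Longrightarrow> length (circ_face circ j zs) = length zs - 1"
  by (simp add: circ_face_def)

lemma star_face_Cons_0 [simp]: "star_face star 0 (x # xs) = xs"
  by (simp add: star_face_def)

lemma circ_face_Cons_0 [simp]: "circ_face circ 0 (x # xs) = map (\<lambda>y. circ y x) xs"
  by (simp add: circ_face_def)

lemma star_face_Cons_Suc [simp]:
  "j < length xs \<Longrightarrow> star_face star (Suc j) (x # xs) = star x (xs ! j) # star_face star j xs"
  by (simp add: star_face_def)

lemma circ_face_Cons_Suc [simp]:
  "circ_face circ (Suc j) (x # xs) = x # circ_face circ j xs"
  by (simp add: circ_face_def)

lemma degen_gens_eq:
  "degen_gens star circ n =
     {degen_pair star circ p a b q | p a b q. length p + 2 + length q = n}"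
proof
  show "degen_gens star circ n
        \<subseteq> {degen_pair star circ p a b q | p a b q. length p + 2 + length q = n}"
  proof
    fix h assume "h \<in> degen_gens star circ n"
    then obtain xs i where h: "h = frag_of xs + frag_of (take i xs @
        [circ (xs ! Suc i) (xs ! i), star (xs ! i) (xs ! Suc i)] @ drop (Suc (Suc i)) xs)"
      and len: "length xs = n" "Suc i < n"
      unfolding degen_gens_def by blast
    have "xs = take i xs @ xs ! i # xs ! Suc i # drop (Suc (Suc i)) xs"
      using len by (simp add: Cons_nth_drop_Suc)
    then have "h = degen_pair star circ (take i xs) (xs ! i) (xs ! Suc i) (drop (Suc (Suc i)) xs)"
      unfolding h degen_pair_def by (metis append_Cons append_Nil)
    with len show "h \<in> {degen_pair star circ p a b q | p a b q. length p + 2 + length q = n}"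
      by force
  qed
  show "{degen_pair star circ p a b q | p a b q. length p + 2 + length q = n}
        \<subseteq> degen_gens star circ n"
  proof
    fix h assume "h \<in> {degen_pair star circ p a b q | p a b q. length p + 2 + length q = n}"
    then obtain p a b q where h: "h = degen_pair star circ p a b q"
      and len: "length p + 2 + length q = n"
      by blast
    show "h \<in> degen_gens star circ n"
      unfolding degen_gens_def h degen_pair_def
      by (rule CollectI, rule exI[of _ "p @ a # b # q"], rule exI[of _ "length p"])
        (use len in \<open>auto simp: nth_append\<close>)
  qed
qed

lemma degen_gens_subset_carrier: "degen_gens star circ n \<subseteq> carrier (chain_group n)"
  by (auto simp: degen_gens_eq degen_pair_def chain_group_def keys_frag_of
      dest!: subsetD[OF keys_add])

lemma degen_chains_eq_generate:
  "n \<ge> 2 \<Longrightarrow> degen_chains star circ n = generate (chain_group n) (degen_gens star circ n)"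
  using degen_gens_subset_carrier[of star circ n]
  by (simp add: degen_chains_def carrier_subgroup_generated Int_absorb1)

lemma degen_chains_zero: "0 \<in> degen_chains star circ n"
proof (cases "n \<ge> 2")
  case True
  then show ?thesis
    using generate.one[of "chain_group n" "degen_gens star circ n"]
    by (simp add: degen_chains_eq_generate chain_group_def)
qed (simp add: degen_chains_def)

lemma degen_chains_add:
  assumes "x \<in> degen_chains star circ n" "y \<in> degen_chains star circ n"
  shows "x + y \<in> degen_chains star circ n"
proof (cases "n \<ge> 2")
  case True
  then show ?thesis
    using assms generate.eng[of x "chain_group n" "degen_gens star circ n" y]
    by (simp add: degen_chains_eq_generate chain_group_def)
qed (use assms in \<open>simp add: degen_chains_def\<close>)

lemma degen_chains_uminus:
  assumes x: "x \<in> degen_chains star circ n"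
  shows "- x \<in> degen_chains star circ n"
proof (cases "n \<ge> 2")
  case True
  let ?G = "chain_group n" and ?D = "degen_gens star circ n"
  have G: "group ?G" by (simp add: chain_group_def)
  have xD: "x \<in> generate ?G ?D"
    using x True by (simp add: degen_chains_eq_generate)
  have "inv\<^bsub>?G\<^esub> x \<in> generate ?G ?D"
    by (rule group.generate_m_inv_closed[OF G degen_gens_subset_carrier xD])
  moreover have "x \<in> carrier ?G"
    by (rule group.generate_in_carrier[OF G degen_gens_subset_carrier xD])
  ultimately show ?thesis
    using True by (simp add: degen_chains_eq_generate chain_group_def)
qed (use x in \<open>simp add: degen_chains_def\<close>)

lemma degen_chains_diff:
  "x \<in> degen_chains star circ n \<Longrightarrow> y \<in> degen_chains star circ n \<Longrightarrow>
   x - y \<in> degen_chains star circ n"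
  by (metis diff_conv_add_uminus degen_chains_add degen_chains_uminus)

lemma degen_chains_cmul_sign:
  "x \<in> degen_chains star circ n \<Longrightarrow> frag_cmul ((-1) ^ k) x \<in> degen_chains star circ n"
  by (cases "even k") (auto simp: degen_chains_uminus)

lemma degen_chains_sum:
  "finite A \<Longrightarrow> (\<And>j. j \<in> A \<Longrightarrow> f j \<in> degen_chains star circ n) \<Longrightarrow>
   sum f A \<in> degen_chains star circ n"
  by (induction A rule: finite_induct) (auto simp: degen_chains_zero degen_chains_add)

lemma degen_pair_in_degen_chains:
  assumes "length p + 2 + length q = n"
  shows "degen_pair star circ p a b q \<in> degen_chains star circ n"
proof -
  have "degen_pair star circ p a b q \<in> degen_gens star circ n"
    using assms by (auto simp: degen_gens_eq)
  with assms show ?thesis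
    by (simp add: degen_chains_eq_generate generate.incl)
qed

lemma frag_extend_generate_closed:
  assumes c: "c \<in> generate (free_Abelian_group S) G"
    and G: "G \<subseteq> carrier (free_Abelian_group S)"
    and zero: "0 \<in> Z"
    and add: "\<And>x y. x \<in> Z \<Longrightarrow> y \<in> Z \<Longrightarrow> x + y \<in> Z"
    and uminus: "\<And>x. x \<in> Z \<Longrightarrow> - x \<in> Z"
    and gens: "\<And>h. h \<in> G \<Longrightarrow> frag_extend f h \<in> Z"
  shows "frag_extend f c \<in> Z"
  using c
proof (induction rule: generate.induct)
  case (inv h)
  with G have "inv\<^bsub>free_Abelian_group S\<^esub> h = - h" by auto
  then show ?case by (simp add: inv.hyps gens uminus frag_extend_minus)
qed (simp_all add: zero gens add frag_extend_add)

context
  fixes star circ :: "'a \<Rightarrow> 'a \<Rightarrow> 'a"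
  assumes vfb: "virtual_flat_biquandle star circ"
begin

lemma star_star_commute: "star (star x b) a = star (star x a) b"
  using vfb unfolding virtual_flat_biquandle_def by metis

lemma circ_circ_commute: "circ (circ x b) a = circ (circ x a) b"
  using vfb unfolding virtual_flat_biquandle_def by metis

lemma star_circ_commute: "star (circ x b) a = circ (star x a) b"
  using vfb unfolding virtual_flat_biquandle_def by metis

lemma star_circ_right: "star x (circ a b) = star x a"
  and star_star_right: "star x (star a b) = star x a"
  using vfb unfolding virtual_flat_biquandle_def by metis+

lemma circ_star_right: "circ x (star a b) = circ x a"
  and circ_circ_right: "circ x (circ a b) = circ x a"
  using vfb unfolding virtual_flat_biquandle_def by metis+

lemma circ_star_cancel: "circ (star x a) a = x"
  and star_circ_cancel: "star (circ x a) a = x"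
  using vfb unfolding virtual_flat_biquandle_def by metis+

lemma bd_term_degen_pair_below:
  assumes j: "j < length p"
  defines "c \<equiv> p ! j"
  shows "bd_term star circ (p @ a # b # q) j + bd_term star circ (p @ circ b a # star a b # q) j =
    frag_cmul ((-1) ^ (j + 1))
      (degen_pair star circ (star_face star j p) a b q
       - degen_pair star circ (circ_face circ j p) (circ a c) (circ b c) (map (\<lambda>x. circ x c) q))"
proof -
  have "circ (circ b a) c = circ (circ b c) (circ a c)"
    by (simp add: circ_circ_right circ_circ_commute)
  moreover have "circ (star a b) c = star (circ a c) (circ b c)"
    by (simp add: star_circ_right star_circ_commute)
  ultimately show ?thesis
    using j by (simp add: bd_term_def degen_pair_def star_face_append_left circ_face_append_left
        c_def frag_cmul_distrib2 frag_cmul_diff_distrib2)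
qed

lemma bd_term_degen_pair_above:
  assumes k: "k < length q"
  defines "c \<equiv> q ! k"
  shows "bd_term star circ (p @ a # b # q) (length p + Suc (Suc k))
       + bd_term star circ (p @ circ b a # star a b # q) (length p + Suc (Suc k)) =
    frag_cmul ((-1) ^ (length p + Suc (Suc k) + 1))
      (degen_pair star circ (map (\<lambda>x. star x c) p) (star a c) (star b c) (star_face star k q)
       - degen_pair star circ p a b (circ_face circ k q))"
proof -
  let ?j = "length p + Suc (Suc k)"
  have "star (circ b a) c = circ (star b c) (star a c)"
    by (simp add: circ_star_right star_circ_commute)
  moreover have "star (star a b) c = star (star a c) (star b c)"
    by (simp add: star_star_right star_star_commute)
  moreover have "star_face star ?j (p @ x # y # q)
      = map (\<lambda>z. star z c) p @ star x c # star y c # star_face star k q" for x y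
    using k by (subst star_face_append_right) (simp_all add: c_def)
  moreover have "circ_face circ ?j (p @ x # y # q) = p @ x # y # circ_face circ k q" for x y
    using k by (subst circ_face_append_right) simp_all
  ultimately show ?thesis
    unfolding bd_term_def degen_pair_def
    by (simp only:) (simp add: frag_cmul_distrib2 frag_cmul_diff_distrib2)
qed

lemma bd_term_swap_at:
  "bd_term star circ (p @ circ b a # star a b # q) (length p)
   = - bd_term star circ (p @ a # b # q) (Suc (length p))"
  using star_face_append_right[where u = p and k = 0] circ_face_append_right[where u = p and k = 0]
    star_face_append_right[where u = p and k = 1] circ_face_append_right[where u = p and k = 1]
  by (simp add: bd_term_def star_circ_right circ_circ_right circ_star_cancel)

lemma bd_term_swap_at_Suc:
  "bd_term star circ (p @ circ b a # star a b # q) (Suc (length p))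
   = - bd_term star circ (p @ a # b # q) (length p)"
  using star_face_append_right[where u = p and k = 0] circ_face_append_right[where u = p and k = 0]
    star_face_append_right[where u = p and k = 1] circ_face_append_right[where u = p and k = 1]
  by (simp add: bd_term_def star_star_right circ_star_right star_circ_cancel)

lemma bd_tuple_degen_pair:
  "frag_extend (bd_tuple star circ) (degen_pair star circ p a b q)
   \<in> degen_chains star circ (length p + 1 + length q)"
proof -
  let ?m = "length p + 1 + length q" and ?i = "length p"
  define F where "F j = bd_term star circ (p @ a # b # q) j
      + bd_term star circ (p @ circ b a # star a b # q) j" for j
  define J where "J = {..<length p + 2 + length q} - {?i, Suc ?i}"
  have "frag_extend (bd_tuple star circ) (degen_pair star circ p a b q)
      = (\<Sum>j<length p + 2 + length q. F j)"
    by (simp add: degen_pair_def frag_extend_add bd_tuple_eq_sum_bd_term F_def sum.distrib)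
  also have "\<dots> = (F ?i + F (Suc ?i)) + sum F J"
  proof -
    have "{..<length p + 2 + length q} = insert ?i (insert (Suc ?i) J)"
      by (auto simp: J_def)
    moreover have "finite J" "?i \<notin> insert (Suc ?i) J" "Suc ?i \<notin> J"
      by (auto simp: J_def)
    ultimately show ?thesis
      by (simp add: add.assoc)
  qed
  moreover have "F ?i + F (Suc ?i) = 0"
    by (simp add: F_def bd_term_swap_at bd_term_swap_at_Suc)
  moreover have "sum F J \<in> degen_chains star circ ?m"
  proof (rule degen_chains_sum)
    fix j assume j: "j \<in> J"
    show "F j \<in> degen_chains star circ ?m"
    proof (cases "j < ?i")
      case True
      then show ?thesis
        unfolding F_def bd_term_degen_pair_below[OF True]
        by (intro degen_chains_cmul_sign degen_chains_diff degen_pair_in_degen_chains) simp_all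
    next
      case False
      define k where "k = j - Suc (Suc ?i)"
      have k: "k < length q" and jk: "j = ?i + Suc (Suc k)"
        using j False by (auto simp: J_def k_def)
      show ?thesis
        unfolding F_def jk bd_term_degen_pair_above[OF k]
        by (intro degen_chains_cmul_sign degen_chains_diff degen_pair_in_degen_chains)
          (use k in auto)
    qed
  qed (simp add: J_def)
  ultimately show ?thesis
    by simp
qed

lemma bd_tuple_degen_gen:
  "h \<in> degen_gens star circ n \<Longrightarrow>
   frag_extend (bd_tuple star circ) h \<in> degen_chains star circ (n - 1)"
proof -
  assume "h \<in> degen_gens star circ n"
  then obtain p a b q where "h = degen_pair star circ p a b q" "n = length p + 2 + length q"
    by (auto simp: degen_gens_eq)
  with bd_tuple_degen_pair[of p a b q] show ?thesis by simp
qed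

end

theorem lemma5p2:
  fixes star circ :: "'a \<Rightarrow> 'a \<Rightarrow> 'a"
  assumes "virtual_flat_biquandle star circ"
  shows "\<forall>n. \<forall>c \<in> degen_chains star circ n.
           boundary star circ n c \<in> degen_chains star circ (n - 1)"
proof (intro allI ballI)
  fix n c assume c: "c \<in> degen_chains star circ n"
  show "boundary star circ n c \<in> degen_chains star circ (n - 1)"
  proof (cases "n \<le> 1")
    case True
    then show ?thesis by (simp add: boundary_def degen_chains_zero)
  next
    case False
    then have "c \<in> generate (free_Abelian_group {xs. length xs = n}) (degen_gens star circ n)"
      using c by (simp add: degen_chains_eq_generate chain_group_def)
    then have "frag_extend (bd_tuple star circ) c \<in> degen_chains star circ (n - 1)"
    proof (rule frag_extend_generate_closed)
      show "degen_gens star circ n \<subseteq> carrier (free_Abelian_group {xs. length xs = n})"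
        using degen_gens_subset_carrier[of star circ n] False by (simp add: chain_group_def)
    qed (use bd_tuple_degen_gen[OF assms] in
        \<open>simp_all add: degen_chains_zero degen_chains_add degen_chains_uminus\<close>)
    with False show ?thesis by (simp add: boundary_def)
  qed
qed

end
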